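(* For an integer $k\ge 1$ let $\ell(k)=s+1$, where $s\ge 0$ is the exponent of $2$ in the prime factorization of $k$ (so $k/2^s$ is odd), and let $r_k=\sum_{i=1}^k \ell(i)$ (so $r_1=1$ and $r_k=r_{k-1}+\ell(k)$). Then for every integer $m\ge 1$ the set $\{r_n: n\in\mathbb{N},\ \ell(n)=m\}$ has strictly positive lower density in $\mathbb{N}$, i.e. $\liminf_{N\to\infty}\frac{1}{N}\,\bigl|\{r_n: \ell(n)=m\}\cap\{1,\dots,N\}\bigr|>0$. *)

theory Defs
  imports "HOL-Analysis.Analysis" "HOL-Computational_Algebra.Primes"
begin

definition ell :: "nat \<Rightarrow> nat" where
  "ell k = multiplicity (2::nat) k + 1"

definition r :: "nat \<Rightarrow> nat" where
  "r k = (\<Sum>i=1..k. ell i)"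

definition Rset :: "nat \<Rightarrow> nat set" where
  "Rset m = {r n | n. n \<ge> 1 \<and> ell n = m}"

end

theory Submission
  imports Defs
begin

text \<open>Since \<open>ell (2i) = ell i + 1\<close> and \<open>ell (2i+1) = 1\<close>, the partial sums satisfy
  \<open>r (2n) = r n + 2n\<close>, whence \<open>n \<le> r n \<le> 2n\<close>. Every \<open>n = 2^(m-1) (2j+1)\<close> has \<open>ell n = m\<close>,
  and for \<open>j < N div 2^(m+1)\<close> also \<open>r n \<le> 2n \<le> N\<close>. As \<open>r\<close> is strictly increasing, these give
  at least \<open>N div 2^(m+1)\<close> distinct elements of \<open>Rset m \<inter> {1..N}\<close>, so the lower density is at
  least \<open>1 / 2^(m+2)\<close>.\<close>

lemma ell_ge_1: "ell n \<ge> 1"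
  by (simp add: ell_def)

lemma ell_odd: "ell (Suc (2 * n)) = 1"
  unfolding ell_def by (simp add: not_dvd_imp_multiplicity_0)

lemma ell_double: "n > 0 \<Longrightarrow> ell (2 * n) = ell n + 1"
  unfolding ell_def using multiplicity_times_same[where p = "2::nat" and x = n]
  by (simp add: mult.commute)

lemma ell_pow2_times_odd: "ell (2 ^ k * Suc (2 * j)) = k + 1"
proof -
  have "multiplicity (2::nat) (2 ^ k * Suc (2 * j))
          = multiplicity 2 ((2::nat) ^ k) + multiplicity 2 (Suc (2 * j))"
    by (rule prime_elem_multiplicity_mult_distrib) auto
  then show ?thesis
    using ell_odd[of j] by (simp add: ell_def multiplicity_same_power)
qed

lemma r_Suc: "r (Suc n) = r n + ell (Suc n)"
  by (simp add: r_def)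

lemma r_double: "r (2 * n) = r n + 2 * n"
proof (induction n)
  case 0
  then show ?case by (simp add: r_def)
next
  case (Suc n)
  have "r (2 * Suc n) = r (2 * n) + ell (Suc (2 * n)) + ell (2 * Suc n)"
    by (simp add: r_Suc)
  also have "\<dots> = r n + 2 * n + 1 + ell (Suc n) + 1"
    using Suc.IH ell_double[of "Suc n"] by (simp add: ell_odd)
  finally show ?case by (simp add: r_Suc)
qed

lemma r_le_double: "r n \<le> 2 * n"
proof (induction n rule: nat_bit_induct)
  case zero
  then show ?case by (simp add: r_def)
next
  case (even n)
  then show ?case by (simp add: r_double)
next
  case (odd n)
  then show ?case by (simp add: r_Suc r_double ell_odd)
qed

lemma r_ge: "n \<le> r n"
  unfolding r_def using sum_mono[of "{1..n}" "\<lambda>_. 1" ell] ell_ge_1 by simp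

lemma strict_mono_r: "strict_mono r"
  by (rule strict_monoI_Suc) (simp add: r_Suc ell_def)

lemma card_Rset_ge:
  assumes "m \<ge> 1"
  shows "N div 2 ^ (m + 1) \<le> card (Rset m \<inter> {1..N})"
proof -
  obtain k where m: "m = Suc k"
    using assms by (cases m) auto
  define J where "J = N div 2 ^ (m + 1)"
  define idx where "idx j = 2 ^ k * Suc (2 * j)" for j :: nat
  have "strict_mono idx"
    by (rule strict_monoI) (simp add: idx_def)
  then have inj: "inj (r \<circ> idx)"
    using strict_mono_r by (simp add: strict_mono_o strict_mono_imp_inj_on)
  have "(r \<circ> idx) ` {..<J} \<subseteq> Rset m \<inter> {1..N}"
  proof
    fix x assume "x \<in> (r \<circ> idx) ` {..<J}"
    then obtain j where j: "j < J" and x: "x = r (idx j)" by auto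
    have pos: "idx j \<ge> 1" by (simp add: idx_def Suc_le_eq)
    have "x \<le> 2 * idx j" using x r_le_double by simp
    also have "\<dots> = 2 ^ m * Suc (2 * j)" by (simp add: idx_def m)
    also have "\<dots> \<le> 2 ^ m * (2 * J)" using j by (intro mult_le_mono2) simp
    also have "\<dots> = 2 ^ (m + 1) * J" by simp
    also have "\<dots> \<le> N" unfolding J_def by (rule times_div_less_eq_dividend)
    finally have "x \<le> N" .
    moreover have "x \<ge> 1" using x pos r_ge[of "idx j"] by simp
    moreover have "x \<in> Rset m"
      unfolding Rset_def using x pos ell_pow2_times_odd[of k j] m idx_def by auto
    ultimately show "x \<in> Rset m \<inter> {1..N}" by simp
  qed
  then have "card ((r \<circ> idx) ` {..<J}) \<le> card (Rset m \<inter> {1..N})"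
    by (intro card_mono) auto
  then show ?thesis
    using card_image[OF inj_on_subset[OF inj]] unfolding J_def by simp
qed

lemma liminf_density_pos:
  fixes A :: "nat set"
  assumes "q > 0" and count: "\<And>N. N div q \<le> card (A \<inter> {1..N})"
  shows "liminf (\<lambda>N. ereal (real (card (A \<inter> {1..N})) / real N)) > 0"
proof -
  have "\<forall>\<^sub>F N in sequentially. ereal (1 / (2 * q)) \<le> ereal (real (card (A \<inter> {1..N})) / real N)"
  proof (rule eventually_sequentiallyI)
    fix N assume "2 * q \<le> N"
    moreover have "q * (N div q) + N mod q = N" "N mod q < q"
      using \<open>q > 0\<close> by simp_all
    ultimately have "N \<le> 2 * q * card (A \<inter> {1..N})"
      using count[of N] mult_le_mono2[OF count[of N], of q] by linarith
    then have "real N \<le> 2 * real q * real (card (A \<inter> {1..N}))"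
      by (metis of_nat_le_iff of_nat_mult of_nat_numeral)
    then show "ereal (1 / (2 * q)) \<le> ereal (real (card (A \<inter> {1..N})) / real N)"
      using \<open>q > 0\<close> \<open>2 * q \<le> N\<close> by (simp add: field_simps)
  qed
  then have "ereal (1 / (2 * q)) \<le> liminf (\<lambda>N. ereal (real (card (A \<inter> {1..N})) / real N))"
    by (rule Liminf_bounded)
  then show ?thesis
    by (rule less_le_trans[rotated]) (use \<open>q > 0\<close> in simp)
qed

theorem lemma3p4:
  fixes m :: nat
  assumes "m \<ge> 1"
  shows "liminf (\<lambda>N::nat. ereal (real (card (Rset m \<inter> {1..N})) / real N)) > 0"
  using liminf_density_pos[of "2 ^ (m + 1)"] card_Rset_ge[OF assms] by simp

end
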